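(* Let $q>0$, $x\in\mathbb{R}$ with $|x|<q$, and $\ell\in\{0,1,2,\ldots\}$. Then $$\tilde\gamma_\ell(q+x)=\tilde\gamma_\ell(q)+(-1)^\ell\sum_{j=2}^\infty\frac{x^{j-1}}{(j-1)!}\sum_{k=0}^{\ell}\binom{\ell}{k}(-1)^k k!\, s(j,k+1)\,\zeta_E^{(\ell-k)}(j,q).$$
   Context: For $q>0$, $\zeta_E(z,q)=\sum_{n=0}^\infty (-1)^n (n+q)^{-z}$ for $\mathrm{Re}(z)>0$, extended by analytic continuation to an entire function of $z$; $\zeta_E^{(m)}(z,q)$ denotes $\frac{\partial^m}{\partial z^m}\zeta_E(z,q)$. The modified Stieltjes constants $\tilde\gamma_k(q)$ are defined by the Taylor expansion $\zeta_E(z,q)=\sum_{k=0}^\infty\frac{(-1)^k\tilde\gamma_k(q)}{k!}(z-1)^k$. $s(n,k)$ are the (signed) Stirling numbers of the first kind: $x(x-1)\cdots(x-n+1)=\sum_{k=0}^n s(n,k)x^k$. *)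

theory Defs
  imports "HOL-Analysis.Analysis" "HOL-Combinatorics.Stirling"
begin

definition stirling1_signed :: "nat \<Rightarrow> nat \<Rightarrow> int" where
  "stirling1_signed n k = (-1) ^ (n - k) * int (stirling n k)"

definition zetaE :: "complex \<Rightarrow> real \<Rightarrow> complex" where
  "zetaE z q = (THE f. f holomorphic_on UNIV \<and>
      (\<forall>w. Re w > 0 \<longrightarrow> f w = (\<Sum>n. (-1) ^ n * (of_real (real n + q)) powr (- w)))) z"

definition zetaE_deriv :: "nat \<Rightarrow> complex \<Rightarrow> real \<Rightarrow> complex" where
  "zetaE_deriv m z q = (deriv ^^ m) (\<lambda>w. zetaE w q) z"

text \<open>Modified Stieltjes constants: zetaE z q = sum_k (-1)^k gamma_k(q)/k! (z-1)^k,
  i.e. the k-th Taylor coefficient at 1 is the k-th derivative over k!.\<close>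
definition mod_stieltjes :: "nat \<Rightarrow> real \<Rightarrow> complex" where
  "mod_stieltjes k q = (-1) ^ k * zetaE_deriv k 1 q"

end

theory Submission
  imports Defs "HOL-Complex_Analysis.Complex_Analysis" "HOL-Real_Asymp.Real_Asymp"
begin

text \<open>
  For \<open>Re z > 1\<close>, expanding every term \<open>(n + q + x) powr -z\<close> of the alternating series by the
  binomial series around \<open>n + q\<close> and exchanging the absolutely convergent double sum gives
  \<open>zetaE z (q + x) = (\<Sum>m. ((-z) gchoose m) * x ^ m * zetaE (z + m) q)\<close>.
  On \<open>ball 1 (1/2)\<close> the terms with \<open>m \<ge> 2\<close> are dominated, uniformly in \<open>z\<close>, by a convergent
  binomial series in \<open>\<bar>x\<bar> / q\<close>; so the identity extends to this ball by analytic continuation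
  and may be differentiated \<open>l\<close> times termwise at \<open>z = 1\<close>. Since
  \<open>(-z) gchoose m = (-1)^m * pochhammer z m / m!\<close> and the \<open>k\<close>-th derivative of \<open>pochhammer z m\<close>
  at \<open>z = 1\<close> is \<open>k!\<close> times the unsigned Stirling number \<open>stirling (m + 1) (k + 1)\<close>, Leibniz's
  rule turns the \<open>m\<close>-th term into the \<open>m\<close>-th summand of the theorem, and the term \<open>m = 0\<close> is
  the \<open>l\<close>-th derivative of \<open>zetaE\<close> at \<open>1\<close>.

  That \<open>zetaE\<close> is entire, as its definition presupposes, follows from iterated Euler transforms
  of the alternating series, each of which converges on a larger half-plane.
\<close>

section \<open>Higher derivatives and series of holomorphic functions\<close>

lemma higher_deriv_sum_lessThan:
  fixes n :: nat
  assumes "open S" "z \<in> S" "\<And>i. f i holomorphic_on S"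
  shows "(deriv ^^ k) (\<lambda>w. \<Sum>i<n. f i w) z = (\<Sum>i<n. (deriv ^^ k) (f i) z)"
proof (induction n)
  case (Suc n)
  have "(deriv ^^ k) (\<lambda>w. (\<Sum>i<n. f i w) + f n w) z =
      (deriv ^^ k) (\<lambda>w. \<Sum>i<n. f i w) z + (deriv ^^ k) (f n) z"
    using assms by (intro higher_deriv_add) (auto intro!: holomorphic_intros)
  with Suc show ?case by simp
qed simp

lemma
  fixes f :: "nat \<Rightarrow> complex \<Rightarrow> complex"
  assumes S: "open S" and hol: "\<And>n. f n holomorphic_on S"
    and bound: "\<And>z. z \<in> S \<Longrightarrow> \<exists>d M. 0 < d \<and> summable M \<and>
                  (\<forall>\<^sub>F n in sequentially. \<forall>w\<in>ball z d \<inter> S. norm (f n w) \<le> M n)"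
  shows holomorphic_on_suminf: "(\<lambda>z. \<Sum>n. f n z) holomorphic_on S"
    and sums_higher_deriv_suminf:
      "z \<in> S \<Longrightarrow> (\<lambda>n. (deriv ^^ k) (f n) z) sums (deriv ^^ k) (\<lambda>z. \<Sum>n. f n z) z"
proof -
  have "\<exists>g g'. \<forall>z\<in>S. ((\<lambda>n. f n z) sums g z) \<and> ((\<lambda>n. deriv (f n) z) sums g' z) \<and>
                    (g has_field_derivative g' z) (at z)"
    using S hol bound
    by (intro series_and_derivative_comparison_local) (auto intro: holomorphic_derivI)
  then obtain g g' where g: "\<forall>z\<in>S. ((\<lambda>n. f n z) sums g z) \<and> (g has_field_derivative g' z) (at z)"
    by blast
  have "g holomorphic_on S"
    using g S holomorphic_on_open by blast
  then show "(\<lambda>z. \<Sum>n. f n z) holomorphic_on S"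
    by (rule holomorphic_transform) (use g sums_unique in auto)
next
  assume z: "z \<in> S"
  obtain d M where d: "0 < d" "summable M"
    and M: "\<forall>\<^sub>F n in sequentially. \<forall>w\<in>ball z d \<inter> S. norm (f n w) \<le> M n"
    using bound[OF z] by blast
  have "uniform_limit (ball z d \<inter> S) (\<lambda>n w. \<Sum>i<n. f i w) (\<lambda>w. \<Sum>n. f n w) sequentially"
    by (rule Weierstrass_m_test_ev[OF M d(2)])
  then have "(\<lambda>n. (deriv ^^ k) (\<lambda>w. \<Sum>i<n. f i w) z) \<longlonglongrightarrow> (deriv ^^ k) (\<lambda>w. \<Sum>n. f n w) z"
    using S z d(1) hol
    by (intro higher_deriv_complex_uniform_limit[where A = "ball z d \<inter> S"] always_eventually allI
        holomorphic_on_sum holomorphic_on_subset[OF hol]) auto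
  moreover have "(deriv ^^ k) (\<lambda>w. \<Sum>i<n. f i w) z = (\<Sum>i<n. (deriv ^^ k) (f i) z)" for n
    using S z d(1) hol by (intro higher_deriv_sum_lessThan[of "ball z d \<inter> S"]) (auto intro: holomorphic_on_subset)
  ultimately show "(\<lambda>n. (deriv ^^ k) (f n) z) sums (deriv ^^ k) (\<lambda>z. \<Sum>n. f n z) z"
    by (simp add: sums_def)
qed

lemma higher_deriv_mult_linear:
  assumes "h holomorphic_on UNIV"
  shows "(deriv ^^ k) (\<lambda>z. h z * (z + c)) w = (deriv ^^ k) h w * (w + c) + of_nat k * (deriv ^^ (k - 1)) h w"
  using assms
proof (induction k arbitrary: h)
  case (Suc k)
  have h': "deriv h holomorphic_on UNIV"
    by (rule holomorphic_deriv[OF Suc.prems open_UNIV])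
  have "deriv (\<lambda>z. h z * (z + c)) = (\<lambda>z. deriv h z * (z + c) + h z)"
  proof
    fix z
    have "(h has_field_derivative deriv h z) (at z)"
      using Suc.prems holomorphic_derivI[of h UNIV] by blast
    then have "((\<lambda>z. h z * (z + c)) has_field_derivative deriv h z * (z + c) + h z) (at z)"
      by (auto intro!: derivative_eq_intros)
    then show "deriv (\<lambda>z. h z * (z + c)) z = deriv h z * (z + c) + h z"
      by (rule DERIV_imp_deriv)
  qed
  then have "(deriv ^^ Suc k) (\<lambda>z. h z * (z + c)) w = (deriv ^^ k) (\<lambda>z. deriv h z * (z + c) + h z) w"
    by (simp only: funpow_Suc_right comp_def)
  also have "\<dots> = (deriv ^^ k) (\<lambda>z. deriv h z * (z + c)) w + (deriv ^^ k) h w"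
    using Suc.prems h' by (intro higher_deriv_add[where S = UNIV]) (auto intro!: holomorphic_intros)
  also have "(deriv ^^ k) (\<lambda>z. deriv h z * (z + c)) w =
      (deriv ^^ k) (deriv h) w * (w + c) + of_nat k * (deriv ^^ (k - 1)) (deriv h) w"
    by (rule Suc.IH[OF h'])
  also have "(deriv ^^ k) (deriv h) = (deriv ^^ Suc k) h"
    by (simp only: funpow_Suc_right comp_def)
  also have "of_nat k * (deriv ^^ (k - 1)) (deriv h) w = of_nat k * (deriv ^^ k) h w"
    by (cases k) (simp_all only: funpow_Suc_right comp_def diff_Suc_1 of_nat_0 mult_zero_left)
  finally show ?case
    by (simp add: algebra_simps)
qed simp

lemma higher_deriv_pochhammer_at_1:
  "(deriv ^^ k) (\<lambda>z. pochhammer z m) (1::complex) = fact k * of_nat (stirling (Suc m) (Suc k))"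
proof (induction m arbitrary: k)
  case 0
  then show ?case
    by (cases k) auto
next
  case (Suc m)
  have "(deriv ^^ k) (\<lambda>z::complex. pochhammer z (Suc m)) 1 =
      (deriv ^^ k) (\<lambda>z. pochhammer z m) 1 * (1 + of_nat m) + of_nat k * (deriv ^^ (k - 1)) (\<lambda>z. pochhammer z m) 1"
    unfolding pochhammer_Suc by (intro higher_deriv_mult_linear holomorphic_intros)
  also have "\<dots> = fact k * of_nat (stirling (Suc (Suc m)) (Suc k))"
  proof (cases k)
    case 0
    then show ?thesis
      using Suc[of 0] by (simp add: stirling_Suc_n_1 algebra_simps)
  next
    case (Suc k')
    then show ?thesis
      using Suc.IH[of k] Suc.IH[of k'] by (simp add: algebra_simps)
  qed
  finally show ?case .
qed

lemma summable_on_product_of_summable: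
  fixes A B :: "nat \<Rightarrow> real"
  assumes "summable A" "\<And>n. A n \<ge> 0" "summable B" "\<And>m. B m \<ge> 0"
  shows "(\<lambda>(n, m). A n * B m) summable_on UNIV \<times> UNIV"
proof (rule summable_on_SigmaI[where g = "\<lambda>n. A n * suminf B"])
  have hA: "(A has_sum suminf A) UNIV" and hB: "(B has_sum suminf B) UNIV"
    using assms by (auto intro: sums_nonneg_imp_has_sum summable_sums)
  show "((\<lambda>m. (\<lambda>(n, m). A n * B m) (n, m)) has_sum A n * suminf B) UNIV" for n
    using has_sum_cmult_right[OF hB, of "A n"] by simp
  show "(\<lambda>n. A n * suminf B) summable_on UNIV"
    using has_sum_cmult_left[OF hA, of "suminf B"] by (rule has_sum_imp_summable)
qed (simp add: assms)

lemma sums_swap_dominated: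
  fixes a :: "nat \<Rightarrow> nat \<Rightarrow> 'a::banach" and A B :: "nat \<Rightarrow> real"
  assumes "summable A" "\<And>n. A n \<ge> 0" "summable B" "\<And>m. B m \<ge> 0"
    and bound: "\<And>n m. norm (a n m) \<le> A n * B m"
    and rows: "\<And>n. (\<lambda>m. a n m) sums R n" and cols: "\<And>m. (\<lambda>n. a n m) sums C m"
    and "R sums s"
  shows "C sums s"
proof -
  have "(\<lambda>p. norm ((\<lambda>(n, m). a n m) p)) summable_on UNIV \<times> UNIV"
  proof (rule Infinite_Sum.abs_summable_on_comparison_test'[OF summable_on_product_of_summable[OF assms(1-4)]])
    show "norm ((\<lambda>(n, m). a n m) p) \<le> (\<lambda>(n, m). A n * B m) p" for p
      using bound by (cases p) simp
  qed
  then have abs: "(\<lambda>(n, m). a n m) summable_on UNIV \<times> UNIV"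
    by (rule Infinite_Sum.abs_summable_summable)
  have row_abs: "summable (\<lambda>m. norm (a n m))" for n
    using bound by (intro summable_comparison_test'[OF summable_mult[OF assms(3)], of 0]) auto
  have col_abs: "summable (\<lambda>n. norm (a n m))" for m
    using bound by (intro summable_comparison_test'[OF summable_mult2[OF assms(1)], of 0]) auto
  define S where "S = infsum (\<lambda>(n, m). a n m) (UNIV \<times> UNIV)"
  have "((\<lambda>(n, m). a n m) has_sum S) (UNIV \<times> UNIV)"
    unfolding S_def using abs by (rule has_sum_infsum)
  then have swapped: "((\<lambda>(m, n). a n m) has_sum S) (UNIV \<times> UNIV)"
    using has_sum_swap[of "\<lambda>(n, m). a n m" UNIV UNIV S] by simp
  have "(R has_sum S) UNIV"
  proof (rule has_sum_SigmaD[OF \<open>((\<lambda>(n, m). a n m) has_sum S) _\<close>])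
    show "((\<lambda>m. (\<lambda>(n, m). a n m) (n, m)) has_sum R n) UNIV" for n
      using norm_summable_imp_has_sum[OF row_abs rows] by simp
  qed
  moreover have "(C has_sum S) UNIV"
  proof (rule has_sum_SigmaD[OF swapped])
    show "((\<lambda>n. (\<lambda>(m, n). a n m) (m, n)) has_sum C m) UNIV" for m
      using norm_summable_imp_has_sum[OF col_abs cols] by simp
  qed
  ultimately show ?thesis
    using \<open>R sums s\<close> has_sum_imp_sums sums_unique2 by metis
qed

lemma summable_real_add_powr:
  assumes "p > 1" "q > 0"
  shows "summable (\<lambda>n. (real n + q) powr (-p))"
proof (rule summable_comparison_test')
  show "summable (\<lambda>n. real n powr (-p))"
    using assms summable_real_powr_iff by simp
  show "norm ((real n + q) powr (-p)) \<le> real n powr (-p)" if "n \<ge> 1" for n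
    using that powr_mono2'[of "-p" "real n" "real n + q"] assms by simp
qed

lemma alternating_sums_half_differences:
  fixes b :: "nat \<Rightarrow> 'a::{real_normed_field, field_char_0}"
  assumes "summable (\<lambda>n. (-1)^n * (b n - b (Suc n)))" and "b \<longlonglongrightarrow> 0"
  shows "(\<lambda>n. (-1)^n * b n) sums (b 0 / 2 + (\<Sum>n. (-1)^n * (b n - b (Suc n))) / 2)"
proof -
  have partial: "(\<Sum>n<N. (-1)^n * b n) =
      ((\<Sum>n<N. (-1)^n * (b n - b (Suc n))) + b 0 - (-1)^N * b N) / 2" for N
    by (induction N) (simp_all add: field_simps)
  have "(\<lambda>N. norm ((-1)^N * b N)) \<longlonglongrightarrow> 0"
    using tendsto_norm_zero[OF assms(2)] by (simp add: norm_mult norm_power)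
  then have "(\<lambda>N. (-1)^N * b N) \<longlonglongrightarrow> 0"
    by (rule tendsto_norm_zero_cancel)
  then have "(\<lambda>N. ((\<Sum>n<N. (-1)^n * (b n - b (Suc n))) + b 0 - (-1)^N * b N) / 2) \<longlonglongrightarrow>
        ((\<Sum>n. (-1)^n * (b n - b (Suc n))) + b 0 - 0) / 2"
    by (intro tendsto_intros summable_LIMSEQ assms(1)) (simp_all add: zero_neq_numeral)
  then show ?thesis
    unfolding sums_def partial by (simp add: add_divide_distrib add_ac)
qed

lemma pochhammer_nonneg':
  fixes x :: "'a::linordered_semidom"
  shows "0 \<le> x \<Longrightarrow> 0 \<le> pochhammer x n"
  by (induction n) (auto simp: pochhammer_Suc)

lemma pochhammer_mono:
  fixes x y :: "'a::linordered_semidom"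
  assumes "0 \<le> x" "x \<le> y"
  shows "pochhammer x n \<le> pochhammer y n"
  by (induction n) (use assms in \<open>auto simp: pochhammer_Suc pochhammer_nonneg' intro!: mult_mono add_mono\<close>)

lemma norm_pochhammer_le:
  fixes z :: "'a::real_normed_field"
  shows "norm (pochhammer z n) \<le> pochhammer (norm z) n"
proof (induction n)
  case (Suc n)
  have "norm (z + of_nat n) \<le> norm z + of_nat n"
    using norm_triangle_ineq[of z "of_nat n"] by simp
  with Suc show ?case
    by (auto simp: pochhammer_Suc norm_mult pochhammer_nonneg' intro!: mult_mono)
qed simp

lemma norm_gchoose_minus_le:
  fixes z :: complex
  shows "norm ((-z) gchoose m) \<le> pochhammer (norm z) m / fact m"
proof -
  have "(-z) gchoose m = (-1)^m * pochhammer z m / fact m"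
    by (simp add: gbinomial_pochhammer)
  then have "norm ((-z) gchoose m) = norm (pochhammer z m) / fact m"
    by (simp add: norm_mult norm_divide norm_power)
  also have "\<dots> \<le> pochhammer (norm z) m / fact m"
    by (intro divide_right_mono norm_pochhammer_le) auto
  finally show ?thesis .
qed

lemma summable_pochhammer_fact_power:
  fixes r u :: real
  assumes "0 \<le> u" "u < 1"
  shows "summable (\<lambda>m. pochhammer r m / fact m * u ^ m)"
proof -
  have "((-r) gchoose m) * (-u) ^ m = ((-1)^m * (-1)^m) * (pochhammer r m / fact m * u ^ m)" for m
    by (simp add: gbinomial_pochhammer power_minus[of u])
  then have "((-r) gchoose m) * (-u) ^ m = pochhammer r m / fact m * u ^ m" for m
    by (simp flip: power_mult_distrib)
  moreover have "summable (\<lambda>m. ((-r) gchoose m) * (-u) ^ m)"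
    using gen_binomial_real[of "-u" "-r"] assms sums_summable by auto
  ultimately show ?thesis
    by simp
qed

lemma powr_le_powr_add_powr:
  fixes q :: real
  assumes "q > 0" "a \<le> t" "t \<le> b"
  shows "q powr t \<le> q powr a + q powr b"
proof (cases "q \<ge> 1")
  case True
  then have "q powr t \<le> q powr b"
    using assms by (intro powr_mono) auto
  then show ?thesis
    by (simp add: add_increasing)
next
  case False
  then have "q powr t \<le> q powr a"
    using assms by (intro powr_mono') auto
  then show ?thesis
    by (simp add: add_increasing2)
qed

lemma minus_one_power_stirling:
  "(-1) ^ m * (of_nat (stirling (Suc m) (Suc k)) :: 'a::comm_ring_1) =
     (-1) ^ k * of_int (stirling1_signed (Suc m) (Suc k))"
proof (cases "k \<le> m")
  case True
  then have "(-1 :: 'a) ^ m = (-1) ^ k * (-1) ^ (m - k)"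
    by (simp flip: power_add)
  then show ?thesis
    by (simp add: stirling1_signed_def)
qed (simp add: stirling1_signed_def)

section \<open>Analytic continuation by Euler transforms\<close>

fun neg_diff_powr :: "nat \<Rightarrow> complex \<Rightarrow> complex \<Rightarrow> complex" where
  "neg_diff_powr 0 z w = w powr (-z)"
| "neg_diff_powr (Suc K) z w = neg_diff_powr K z w - neg_diff_powr K z (w + 1)"

lemma holomorphic_neg_diff_powr: "(\<lambda>z. neg_diff_powr K z w) holomorphic_on A"
  by (induction K arbitrary: w) (auto intro!: holomorphic_intros)

lemma has_field_derivative_neg_diff_powr:
  assumes "Re w > 0"
  shows "((\<lambda>w. neg_diff_powr K z w) has_field_derivative (-z * neg_diff_powr K (z + 1) w)) (at w)"
  using assms
proof (induction K arbitrary: w)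
  case 0
  then have "w \<notin> \<real>\<^sub>\<le>\<^sub>0"
    by (auto simp: complex_nonpos_Reals_iff)
  from has_field_derivative_powr[OF this, of "-z"] show ?case
    by simp
next
  case (Suc K)
  have "(neg_diff_powr K z has_field_derivative (-z * neg_diff_powr K (z + 1) (w + 1))) (at (w + 1))"
    using Suc by simp
  then have "((\<lambda>w. neg_diff_powr K z (w + 1)) has_field_derivative (-z * neg_diff_powr K (z + 1) (w + 1))) (at w)"
    using DERIV_shift by blast
  from DERIV_diff[OF Suc.IH[OF Suc.prems] this] show ?case
    by (simp add: algebra_simps)
qed

lemma norm_neg_diff_powr_Suc_le:
  assumes "t > 0"
    and B: "\<And>s. t \<le> s \<Longrightarrow> s \<le> t + 1 \<Longrightarrow> norm (neg_diff_powr K (z + 1) (of_real s)) \<le> B"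
  shows "norm (neg_diff_powr (Suc K) z (of_real t)) \<le> norm z * B"
proof -
  define S where "S = complex_of_real ` {t..t+1}"
  have "norm (neg_diff_powr K z (of_real t) - neg_diff_powr K z (of_real (t + 1))) \<le>
      norm z * B * norm (complex_of_real t - of_real (t + 1))"
  proof (rule field_differentiable_bound)
    show "convex S"
      unfolding S_def by (intro convex_linear_image bounded_linear.linear[OF bounded_linear_of_real]) auto
    show "((\<lambda>w. neg_diff_powr K z w) has_field_derivative (-z * neg_diff_powr K (z + 1) w)) (at w within S)"
      if "w \<in> S" for w
    proof -
      have "Re w > 0"
        using that \<open>t > 0\<close> unfolding S_def by auto
      then show ?thesis
        by (rule has_field_derivative_at_within[OF has_field_derivative_neg_diff_powr])
    qed
    show "norm (-z * neg_diff_powr K (z + 1) w) \<le> norm z * B" if "w \<in> S" for w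
      using that B unfolding S_def by (auto simp: norm_mult intro!: mult_left_mono)
    show "complex_of_real t \<in> S" "complex_of_real (t + 1) \<in> S"
      using \<open>t > 0\<close> unfolding S_def by (auto intro!: imageI simp del: of_real_add)
  qed
  then show ?thesis
    by simp
qed

lemma norm_neg_diff_powr_le:
  assumes "t > 0" "Re z + K \<ge> 0"
  shows "norm (neg_diff_powr K z (of_real t)) \<le> (norm z + K)^K * t powr (-Re z - K)"
  using assms
proof (induction K arbitrary: z t)
  case 0
  then show ?case by (simp add: norm_powr_real_powr)
next
  case (Suc K)
  have "norm (neg_diff_powr (Suc K) z (of_real t)) \<le>
      norm z * ((norm z + 1 + K)^K * t powr (-Re z - 1 - K))"
  proof (rule norm_neg_diff_powr_Suc_le)
    fix s assume s: "t \<le> s" "s \<le> t + 1"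
    have "norm (neg_diff_powr K (z + 1) (of_real s)) \<le> (norm (z + 1) + K)^K * s powr (-Re (z + 1) - K)"
      using Suc.IH[of s "z + 1"] s Suc.prems by simp
    also have "\<dots> \<le> (norm z + 1 + K)^K * t powr (-Re z - 1 - K)"
    proof (rule mult_mono)
      show "(norm (z + 1) + K)^K \<le> (norm z + 1 + K)^K"
        by (intro power_mono) (use norm_triangle_ineq[of z 1] in auto)
      show "s powr (-Re (z + 1) - K) \<le> t powr (-Re z - 1 - K)"
        using powr_mono2'[of "-Re z - 1 - K" t s] Suc.prems s by simp
    qed auto
    finally show "norm (neg_diff_powr K (z + 1) (of_real s)) \<le> (norm z + 1 + K)^K * t powr (-Re z - 1 - K)" .
  qed (use Suc.prems in simp)
  also have "\<dots> \<le> (norm z + Suc K)^Suc K * t powr (-Re z - Suc K)"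
  proof -
    have "norm z * (norm z + 1 + K)^K \<le> (norm z + 1 + K) * (norm z + 1 + K)^K"
      by (intro mult_right_mono) auto
    then show ?thesis
      by (simp add: algebra_simps mult_right_mono)
  qed
  finally show ?case .
qed

lemma norm_neg_diff_powr_shift_le:
  assumes "q > 0" "Re z + K \<ge> 0"
  shows "norm (neg_diff_powr K z (of_real (real n + q))) \<le> (norm z + K)^K * (real n + q) powr (-(Re z + K))"
  using norm_neg_diff_powr_le[of "real n + q" z K] assms by simp

lemma summable_alternating_neg_diff_powr:
  assumes "q > 0" "Re z + K > 1"
  shows "summable (\<lambda>n. (-1)^n * neg_diff_powr K z (of_real (real n + q)))"
proof (rule summable_comparison_test')
  show "summable (\<lambda>n. (norm z + K)^K * (real n + q) powr (-(Re z + K)))"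
    using assms by (intro summable_mult summable_real_add_powr) auto
  show "norm ((-1)^n * neg_diff_powr K z (of_real (real n + q))) \<le> (norm z + K)^K * (real n + q) powr (-(Re z + K))" for n
    using norm_neg_diff_powr_shift_le[of q z K n] assms by (simp add: norm_mult norm_power)
qed

lemma sums_alternating_neg_diff_powr:
  assumes q: "q > 0" and z: "Re z > - real K"
  shows "(\<lambda>n. (-1)^n * neg_diff_powr K z (of_real (real n + q))) sums
           (neg_diff_powr K z (of_real q) / 2 + (\<Sum>n. (-1)^n * neg_diff_powr (Suc K) z (of_real (real n + q))) / 2)"
proof -
  define b where "b n = neg_diff_powr K z (of_real (real n + q))" for n
  have diff: "b n - b (Suc n) = neg_diff_powr (Suc K) z (of_real (real n + q))" for n
    by (simp add: b_def add_ac)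
  have "b \<longlonglongrightarrow> 0"
  proof (rule Lim_null_comparison)
    show "\<forall>\<^sub>F n in sequentially. norm (b n) \<le> (norm z + K)^K * (real n + q) powr (-(Re z + K))"
      using norm_neg_diff_powr_shift_le[of q z K] q z unfolding b_def by simp
    show "(\<lambda>n. (norm z + K)^K * (real n + q) powr (-(Re z + K))) \<longlonglongrightarrow> 0"
      using z q by (intro tendsto_mult_right_zero) real_asymp
  qed
  moreover have "summable (\<lambda>n. (-1)^n * (b n - b (Suc n)))"
    unfolding diff using q z by (intro summable_alternating_neg_diff_powr) auto
  ultimately show ?thesis
    using alternating_sums_half_differences[of b] unfolding diff by (simp add: b_def)
qed

text \<open>
  The \<open>K\<close>-fold Euler transform of the alternating series; its remaining series converges for
  \<open>Re z > 1 - K\<close>.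
\<close>

definition euler_zetaE :: "nat \<Rightarrow> real \<Rightarrow> complex \<Rightarrow> complex" where
  "euler_zetaE K q z = (\<Sum>k<K. neg_diff_powr k z (of_real q) / 2^(k+1)) +
     (\<Sum>n. (-1)^n * neg_diff_powr K z (of_real (real n + q))) / 2^K"

lemma euler_zetaE_Suc:
  assumes "q > 0" "Re z > - real K"
  shows "euler_zetaE (Suc K) q z = euler_zetaE K q z"
  using sums_unique[OF sums_alternating_neg_diff_powr[OF assms], symmetric]
  by (simp add: euler_zetaE_def add_divide_distrib divide_divide_eq_left mult.commute del: neg_diff_powr.simps)

lemma euler_zetaE_eq:
  assumes "q > 0" "Re z > - real K" "K \<le> K'"
  shows "euler_zetaE K' q z = euler_zetaE K q z"
  using assms(3)
proof (induction K' rule: dec_induct)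
  case (step K')
  then show ?case
    using euler_zetaE_Suc[OF assms(1), where z = z and K = K'] assms(2) by simp
qed simp

lemma sums_euler_zetaE:
  assumes "q > 0" "Re z > 0"
  shows "(\<lambda>n. (-1)^n * (of_real (real n + q)) powr (-z)) sums euler_zetaE 1 q z"
  using sums_alternating_neg_diff_powr[where K = 0] assms by (simp add: euler_zetaE_def)

lemma neg_diff_powr_local_bound:
  assumes q: "q > 0" and z: "Re z > 1 - real K"
  shows "\<exists>d M. 0 < d \<and> summable M \<and> (\<forall>\<^sub>F n in sequentially. \<forall>w\<in>ball z d.
           norm ((-1)^n * neg_diff_powr K w (of_real (real n + q))) \<le> M n)"
proof -
  define d where "d = (Re z - 1 + K) / 2"
  have d: "d > 0"
    using z by (simp add: d_def)
  define M where "M n = (norm z + d + K)^K * (real n + q) powr (-(1 + d))" for n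
  have "summable M"
    unfolding M_def using d q by (intro summable_mult summable_real_add_powr) auto
  moreover have "norm ((-1)^n * neg_diff_powr K w (of_real (real n + q))) \<le> M n"
    if n: "n \<ge> 1" and w: "w \<in> ball z d" for n w
  proof -
    have "Re z - Re w \<le> norm (z - w)" "norm w \<le> norm z + norm (z - w)" "norm (z - w) < d"
      using abs_Re_le_cmod[of "z - w"] norm_triangle_ineq2[of w z] w
      by (auto simp: norm_minus_commute dist_norm)
    then have Re_w: "Re w > 1 - real K + d"
      unfolding d_def by (simp add: field_simps)
    have norm_w: "norm w \<le> norm z + d"
      using \<open>norm w \<le> norm z + norm (z - w)\<close> \<open>norm (z - w) < d\<close> by linarith
    have "norm ((-1)^n * neg_diff_powr K w (of_real (real n + q))) \<le> (norm w + K)^K * (real n + q) powr (-(Re w + K))"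
      using norm_neg_diff_powr_shift_le[of q w K n] q Re_w d by (simp add: norm_mult norm_power)
    also have "\<dots> \<le> M n"
      unfolding M_def
    proof (rule mult_mono)
      show "(norm w + K)^K \<le> (norm z + d + K)^K"
        using norm_w by (intro power_mono) auto
      show "(real n + q) powr (-(Re w + K)) \<le> (real n + q) powr (-(1 + d))"
        using n q Re_w by (intro powr_mono) auto
    qed (use d in auto)
    finally show ?thesis .
  qed
  ultimately show ?thesis
    using d unfolding eventually_sequentially by blast
qed

lemma holomorphic_euler_zetaE:
  assumes "q > 0"
  shows "euler_zetaE K q holomorphic_on {z. Re z > 1 - real K}"
proof -
  have "(\<lambda>z. \<Sum>n. (-1)^n * neg_diff_powr K z (of_real (real n + q))) holomorphic_on {z. Re z > 1 - real K}"
  proof (rule holomorphic_on_suminf[OF open_halfspace_Re_gt])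
    show "(\<lambda>z. (-1)^n * neg_diff_powr K z (of_real (real n + q))) holomorphic_on {z. Re z > 1 - real K}" for n
      by (intro holomorphic_intros holomorphic_neg_diff_powr)
    show "\<exists>d M. 0 < d \<and> summable M \<and> (\<forall>\<^sub>F n in sequentially. \<forall>w\<in>ball z d \<inter> {z. Re z > 1 - real K}.
            norm ((-1)^n * neg_diff_powr K w (of_real (real n + q))) \<le> M n)"
      if z: "z \<in> {z. Re z > 1 - real K}" for z
    proof -
      obtain d M where "0 < d" "summable M" and M: "\<forall>\<^sub>F n in sequentially. \<forall>w\<in>ball z d.
          norm ((-1)^n * neg_diff_powr K w (of_real (real n + q))) \<le> M n"
        using neg_diff_powr_local_bound[OF assms, where z = z and K = K] z by auto
      moreover have "\<forall>\<^sub>F n in sequentially. \<forall>w\<in>ball z d \<inter> {z. Re z > 1 - real K}.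
          norm ((-1)^n * neg_diff_powr K w (of_real (real n + q))) \<le> M n"
        using M by eventually_elim auto
      ultimately show ?thesis
        by blast
    qed
  qed
  then show ?thesis
    unfolding euler_zetaE_def[abs_def] by (intro holomorphic_intros holomorphic_neg_diff_powr) auto
qed

definition euler_zetaE_cont :: "real \<Rightarrow> complex \<Rightarrow> complex" where
  "euler_zetaE_cont q z = euler_zetaE (nat \<lceil>1 - Re z\<rceil>) q z"

lemma euler_zetaE_cont_eq:
  assumes "q > 0" "Re z > - real K"
  shows "euler_zetaE_cont q z = euler_zetaE K q z"
proof -
  define K0 where "K0 = nat \<lceil>1 - Re z\<rceil>"
  have "Re z > - real K0"
    unfolding K0_def by linarith
  then have "euler_zetaE (max K K0) q z = euler_zetaE K0 q z"
    using assms(1) by (intro euler_zetaE_eq) auto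
  moreover have "euler_zetaE (max K K0) q z = euler_zetaE K q z"
    using assms by (intro euler_zetaE_eq) auto
  ultimately show ?thesis
    unfolding euler_zetaE_cont_def K0_def by simp
qed

lemma holomorphic_euler_zetaE_cont:
  assumes "q > 0"
  shows "euler_zetaE_cont q holomorphic_on UNIV"
proof (rule holomorphic_on_subset)
  show "euler_zetaE_cont q holomorphic_on (\<Union>K. {z. Re z > 1 - real K})"
  proof (rule holomorphic_on_UN_open)
    show "euler_zetaE_cont q holomorphic_on {z. Re z > 1 - real K}" for K
    proof (rule holomorphic_transform[OF holomorphic_euler_zetaE[OF assms]])
      show "euler_zetaE K q z = euler_zetaE_cont q z" if "z \<in> {z. Re z > 1 - real K}" for z
        using euler_zetaE_cont_eq[OF assms, where z = z and K = K] that by simp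
    qed
  qed (rule open_halfspace_Re_gt)
  show "UNIV \<subseteq> (\<Union>K. {z. Re z > 1 - real K})"
  proof
    fix z :: complex
    have "Re z > 1 - real (nat \<lceil>1 - Re z\<rceil> + 1)"
      by linarith
    then show "z \<in> (\<Union>K. {z. Re z > 1 - real K})"
      by blast
  qed
qed

lemma zetaE_eqI:
  assumes hol: "f holomorphic_on UNIV"
    and sums: "\<And>w. Re w > 0 \<Longrightarrow> (\<lambda>n. (-1)^n * (of_real (real n + q)) powr (-w)) sums f w"
  shows "zetaE z q = f z"
proof -
  let ?P = "\<lambda>f. f holomorphic_on UNIV \<and>
      (\<forall>w. Re w > 0 \<longrightarrow> f w = (\<Sum>n. (-1) ^ n * (of_real (real n + q)) powr (- w)))"
  have "(THE f. ?P f) = f"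
  proof (rule the_equality)
    show "?P f"
      using hol sums sums_unique by blast
    show "g = f" if g: "?P g" for g
    proof
      fix z
      show "g z = f z"
      proof (rule analytic_continuation_open[where s = "{w. Re w > 0}" and s' = UNIV and f = g and g = f])
        have "1 \<in> {w. Re w > 0}"
          by simp
        then show "{w. Re w > 0} \<noteq> {}"
          by blast
        show "g holomorphic_on UNIV"
          using g by blast
        show "g w = f w" if "w \<in> {w. Re w > 0}" for w
          using g that sums_unique[OF sums, of w] by simp
      qed (simp_all add: hol open_halfspace_Re_gt connected_UNIV)
    qed
  qed
  then show ?thesis
    unfolding zetaE_def by simp
qed

lemma zetaE_eq_euler_zetaE_cont:
  assumes "q > 0"
  shows "zetaE z q = euler_zetaE_cont q z"
proof (rule zetaE_eqI[OF holomorphic_euler_zetaE_cont[OF assms]])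
  show "(\<lambda>n. (-1)^n * (of_real (real n + q)) powr (-w)) sums euler_zetaE_cont q w" if "Re w > 0" for w
    using sums_euler_zetaE[OF assms that] euler_zetaE_cont_eq[OF assms, where z = w and K = 1] that by simp
qed

lemma holomorphic_zetaE:
  assumes "q > 0"
  shows "(\<lambda>z. zetaE z q) holomorphic_on A"
  using holomorphic_on_subset[OF holomorphic_euler_zetaE_cont[OF assms], of A]
  by (simp add: zetaE_eq_euler_zetaE_cont[OF assms])

lemma holomorphic_zetaE_shift:
  assumes "q > 0"
  shows "(\<lambda>z. zetaE (z + c) q) holomorphic_on A"
  using holomorphic_on_compose[of "\<lambda>z. z + c" A "\<lambda>z. zetaE z q"] holomorphic_zetaE[OF assms]
  by (simp add: o_def holomorphic_intros)

lemma sums_zetaE: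
  assumes "q > 0" "Re z > 0"
  shows "(\<lambda>n. (-1)^n * (of_real (real n + q)) powr (-z)) sums zetaE z q"
  using sums_euler_zetaE[OF assms] euler_zetaE_cont_eq[OF assms(1), where z = z and K = 1] assms(2)
  by (simp add: zetaE_eq_euler_zetaE_cont[OF assms(1)])

lemma norm_zetaE_le:
  assumes q: "q > 0" and w: "Re w \<ge> 2"
  shows "norm (zetaE w q) \<le> (\<Sum>n. (real n + q) powr (-2)) * q powr (2 - Re w)"
proof -
  have summable: "summable (\<lambda>n. (real n + q) powr (-2))"
    using q by (intro summable_real_add_powr) auto
  have "zetaE w q = (\<Sum>n. (-1::complex)^n * (complex_of_real (real n + q)) powr (-w))"
    using sums_zetaE[OF q, of w] w by (simp add: sums_iff)
  also have "norm \<dots> \<le> (\<Sum>n. (real n + q) powr (-2) * q powr (2 - Re w))"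
  proof (rule norm_suminf_le)
    fix n :: nat
    have "norm ((-1::complex)^n * (complex_of_real (real n + q)) powr (-w)) =
        (real n + q) powr (-2) * (real n + q) powr (2 - Re w)"
      using q by (simp add: norm_mult norm_power norm_powr_real_powr flip: powr_add)
    also have "\<dots> \<le> (real n + q) powr (-2) * q powr (2 - Re w)"
      using w q by (intro mult_left_mono powr_mono2') auto
    finally show "norm ((-1::complex)^n * (complex_of_real (real n + q)) powr (-w)) \<le> \<dots>" .
  qed (rule summable_mult2[OF summable])
  also have "\<dots> = (\<Sum>n. (real n + q) powr (-2)) * q powr (2 - Re w)"
    by (rule suminf_mult2[OF summable, symmetric])
  finally show ?thesis .
qed

section \<open>Taylor expansion in the second argument\<close>

definition zetaE_taylor_term :: "real \<Rightarrow> real \<Rightarrow> nat \<Rightarrow> complex \<Rightarrow> complex" where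
  "zetaE_taylor_term q x m z = ((-z) gchoose m) * of_real x ^ m * zetaE (z + of_nat m) q"

lemma sums_zetaE_taylor_term:
  assumes q: "q > 0" and x: "\<bar>x\<bar> < q" and z: "Re z > 1"
  shows "(\<lambda>m. zetaE_taylor_term q x m z) sums zetaE z (q + x)"
proof (rule sums_swap_dominated)
  define u where "u = \<bar>x\<bar> / q"
  have u: "0 \<le> u" "u < 1"
    using q x by (auto simp: u_def)
  define a where "a n m = ((-z) gchoose m) * of_real x ^ m * ((-1)^n * of_real (real n + q) powr (-z - of_nat m))"
    for n m
  show "summable (\<lambda>n. (real n + q) powr (-Re z))"
    using z q by (intro summable_real_add_powr) auto
  show "summable (\<lambda>m. pochhammer (norm z) m / fact m * u ^ m)"
    using u by (rule summable_pochhammer_fact_power)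
  show "0 \<le> pochhammer (norm z) m / fact m * u ^ m" for m
    using u by (simp add: pochhammer_nonneg')
  show "norm (a n m) \<le> (real n + q) powr (-Re z) * (pochhammer (norm z) m / fact m * u ^ m)" for n m
  proof -
    have "norm (of_real (real n + q) powr (-z - of_nat m)) = (real n + q) powr (-Re z - real m)"
      using q by (simp add: norm_powr_real_powr)
    also have "\<dots> = (real n + q) powr (-Re z) / (real n + q) ^ m"
      using q by (simp add: powr_diff powr_realpow)
    finally have "norm (a n m) = norm ((-z) gchoose m) * ((real n + q) powr (-Re z) * (\<bar>x\<bar> / (real n + q)) ^ m)"
      by (simp add: a_def norm_mult norm_power power_divide)
    also have "\<dots> \<le> pochhammer (norm z) m / fact m * ((real n + q) powr (-Re z) * u ^ m)"
      using q unfolding u_def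
      by (intro mult_mono norm_gchoose_minus_le mult_left_mono power_mono divide_left_mono)
         (auto simp: pochhammer_nonneg')
    finally show ?thesis
      by (simp add: mult_ac)
  qed
  show "(\<lambda>m. a n m) sums ((-1)^n * of_real (real n + (q + x)) powr (-z))" for n
    using sums_mult[OF gen_binomial_complex'[of x "real n + q" "-z"], of "(-1)^n"] q x
    by (simp add: a_def mult_ac add_ac)
  show "(\<lambda>n. a n m) sums zetaE_taylor_term q x m z" for m
    using sums_mult[OF sums_zetaE[OF q, of "z + of_nat m"], of "((-z) gchoose m) * of_real x ^ m"] z
    by (simp add: a_def zetaE_taylor_term_def algebra_simps)
  show "(\<lambda>n. (-1)^n * of_real (real n + (q + x)) powr (-z)) sums zetaE z (q + x)"
    using sums_zetaE[of "q + x" z] x z by simp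
qed simp

lemma norm_zetaE_taylor_term_le:
  assumes q: "q > 0" and m: "m \<ge> 2" and w: "w \<in> ball 1 (1/2)"
  shows "norm (zetaE_taylor_term q x m w) \<le> pochhammer (3/2) m / fact m * (\<bar>x\<bar> / q) ^ m *
           ((\<Sum>n. (real n + q) powr (-2)) * (q powr (1/2) + q powr (3/2)))"
proof -
  define S where "S = (\<Sum>n. (real n + q) powr (-2))"
  have "S \<ge> 0"
    unfolding S_def using q by (intro suminf_nonneg summable_real_add_powr) auto
  have "\<bar>1 - Re w\<bar> < 1/2" "norm w < 3/2"
    using w abs_Re_le_cmod[of "1 - w"] norm_triangle_ineq2[of w 1] by (auto simp: dist_norm norm_minus_commute)
  then have Re_w: "1/2 \<le> 2 - Re w" "2 - Re w \<le> 3/2" and norm_w: "norm w \<le> 3/2"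
    by arith+
  have "norm ((-w) gchoose m) \<le> pochhammer (norm w) m / fact m"
    by (rule norm_gchoose_minus_le)
  also have "\<dots> \<le> pochhammer (3/2) m / fact m"
    using norm_w by (intro divide_right_mono pochhammer_mono) auto
  finally have "norm ((-w) gchoose m) \<le> pochhammer (3/2) m / fact m" .
  moreover have "norm (zetaE (w + of_nat m) q) \<le> S * (q powr (1/2) + q powr (3/2)) / q ^ m"
  proof -
    have "norm (zetaE (w + of_nat m) q) \<le> S * q powr (2 - Re w - real m)"
      using norm_zetaE_le[OF q, of "w + of_nat m"] Re_w m unfolding S_def by (simp add: algebra_simps)
    also have "\<dots> = S * q powr (2 - Re w) / q ^ m"
      using q by (simp add: powr_diff powr_realpow)
    also have "\<dots> \<le> S * (q powr (1/2) + q powr (3/2)) / q ^ m"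
      using q Re_w \<open>S \<ge> 0\<close> by (intro divide_right_mono mult_left_mono powr_le_powr_add_powr) auto
    finally show ?thesis .
  qed
  ultimately have "norm (zetaE_taylor_term q x m w) \<le>
      pochhammer (3/2) m / fact m * \<bar>x\<bar> ^ m * (S * (q powr (1/2) + q powr (3/2)) / q ^ m)"
    unfolding zetaE_taylor_term_def norm_mult norm_power
    by (intro mult_mono) (auto simp: pochhammer_nonneg')
  then show ?thesis
    unfolding S_def by (simp add: power_divide field_simps)
qed

lemma zetaE_taylor_term_bounded:
  assumes q: "q > 0" and x: "\<bar>x\<bar> < q"
  shows "\<exists>d M. 0 < d \<and> summable M \<and>
           (\<forall>\<^sub>F m in sequentially. \<forall>w\<in>ball z d \<inter> ball 1 (1/2). norm (zetaE_taylor_term q x m w) \<le> M m)"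
proof (intro exI conjI)
  let ?M = "\<lambda>m. pochhammer (3/2) m / fact m * (\<bar>x\<bar> / q) ^ m *
              ((\<Sum>n. (real n + q) powr (-2)) * (q powr (1/2) + q powr (3/2)))"
  show "summable ?M"
    using q x by (intro summable_mult2 summable_pochhammer_fact_power) auto
  show "\<forall>\<^sub>F m in sequentially. \<forall>w\<in>ball z 1 \<inter> ball 1 (1/2). norm (zetaE_taylor_term q x m w) \<le> ?M m"
    unfolding eventually_sequentially using norm_zetaE_taylor_term_le[OF q] by blast
qed simp

lemma holomorphic_zetaE_taylor_term:
  assumes "q > 0"
  shows "zetaE_taylor_term q x m holomorphic_on A"
proof -
  have "zetaE_taylor_term q x m = (\<lambda>z. ((-z) gchoose m) * of_real x ^ m * zetaE (z + of_nat m) q)"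
    by (simp add: zetaE_taylor_term_def fun_eq_iff)
  then show ?thesis
    using holomorphic_zetaE_shift[OF assms] by (simp add: gbinomial_pochhammer holomorphic_intros)
qed

lemma zetaE_eq_suminf_taylor_term:
  assumes q: "q > 0" and x: "\<bar>x\<bar> < q" and z: "z \<in> ball 1 (1/2)"
  shows "zetaE z (q + x) = (\<Sum>m. zetaE_taylor_term q x m z)"
proof (rule analytic_continuation_open[where s = "ball (5/4) (1/4)" and s' = "ball 1 (1/2)"
      and f = "\<lambda>z. zetaE z (q + x)" and g = "\<lambda>z. \<Sum>m. zetaE_taylor_term q x m z"])
  show "(\<lambda>z. zetaE z (q + x)) holomorphic_on ball 1 (1/2)"
    using q x by (intro holomorphic_zetaE) auto
  show "(\<lambda>z. \<Sum>m. zetaE_taylor_term q x m z) holomorphic_on ball 1 (1/2)"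
    using zetaE_taylor_term_bounded[OF q x]
    by (intro holomorphic_on_suminf holomorphic_zetaE_taylor_term q) auto
  show "ball (5/4) (1/4) \<subseteq> ball (1::complex) (1/2)"
    by (simp add: ball_subset_ball_iff dist_norm norm_divide)
  show "zetaE w (q + x) = (\<Sum>m. zetaE_taylor_term q x m w)" if "w \<in> ball (5/4) (1/4)" for w
  proof -
    have "Re w > 1"
      using that abs_Re_le_cmod[of "5/4 - w"] by (auto simp: dist_norm)
    then show ?thesis
      using sums_zetaE_taylor_term[OF q x] sums_unique by blast
  qed
qed (use z in auto)

lemma sums_higher_deriv_zetaE_taylor_term:
  assumes q: "q > 0" and x: "\<bar>x\<bar> < q"
  shows "(\<lambda>m. (deriv ^^ l) (zetaE_taylor_term q x m) 1) sums zetaE_deriv l 1 (q + x)"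
proof -
  have "(deriv ^^ l) (\<lambda>z. zetaE z (q + x)) 1 = (deriv ^^ l) (\<lambda>z. \<Sum>m. zetaE_taylor_term q x m z) 1"
    using zetaE_taylor_term_bounded[OF q x] zetaE_eq_suminf_taylor_term[OF q x] q x
    by (intro higher_deriv_transform_within_open[of _ "ball 1 (1/2)"] holomorphic_on_suminf
        holomorphic_zetaE_taylor_term holomorphic_zetaE) auto
  moreover have "(\<lambda>m. (deriv ^^ l) (zetaE_taylor_term q x m) 1) sums
      (deriv ^^ l) (\<lambda>z. \<Sum>m. zetaE_taylor_term q x m z) 1"
    using zetaE_taylor_term_bounded[OF q x]
    by (intro sums_higher_deriv_suminf[of "ball 1 (1/2)"] holomorphic_zetaE_taylor_term q) auto
  ultimately show ?thesis
    by (simp add: zetaE_deriv_def)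
qed

lemma higher_deriv_zetaE_taylor_term:
  assumes "q > 0"
  shows "(deriv ^^ l) (zetaE_taylor_term q x m) 1 =
    of_real (x ^ m / fact m) *
      (\<Sum>k=0..l. of_nat (l choose k) * (-1) ^ k * fact k *
         of_int (stirling1_signed (Suc m) (Suc k)) * zetaE_deriv (l - k) (of_nat (Suc m)) q)"
proof -
  note shifted = holomorphic_zetaE_shift[OF assms, of "of_nat m" UNIV]
  have "zetaE_taylor_term q x m = (\<lambda>z. ((-1)^m * of_real x ^ m / fact m) * (pochhammer z m * zetaE (z + of_nat m) q))"
    by (simp add: zetaE_taylor_term_def gbinomial_pochhammer fun_eq_iff)
  then have "(deriv ^^ l) (zetaE_taylor_term q x m) 1 =
      ((-1)^m * of_real x ^ m / fact m) * (deriv ^^ l) (\<lambda>z. pochhammer z m * zetaE (z + of_nat m) q) 1"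
    using shifted by (simp only:) (rule higher_deriv_cmult[where A = UNIV], auto intro!: holomorphic_intros)
  also have "(deriv ^^ l) (\<lambda>z. pochhammer z m * zetaE (z + of_nat m) q) 1 =
      (\<Sum>k=0..l. of_nat (l choose k) * (fact k * of_nat (stirling (Suc m) (Suc k))) *
         zetaE_deriv (l - k) (of_nat (Suc m)) q)"
  proof -
    have "(deriv ^^ j) (\<lambda>z. zetaE (z + of_nat m) q) 1 = zetaE_deriv j (of_nat (Suc m)) q" for j
      using higher_deriv_compose_linear'[of "\<lambda>z. zetaE z q" UNIV UNIV 1 1 "of_nat m" j] holomorphic_zetaE[OF assms]
      by (simp add: zetaE_deriv_def add.commute)
    then show ?thesis
      using shifted by (simp add: higher_deriv_mult[where S = UNIV] holomorphic_intros higher_deriv_pochhammer_at_1)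
  qed
  also have "((-1)^m * of_real x ^ m / fact m) * \<dots> = of_real (x ^ m / fact m) *
      (\<Sum>k=0..l. of_nat (l choose k) * (-1) ^ k * fact k *
         of_int (stirling1_signed (Suc m) (Suc k)) * zetaE_deriv (l - k) (of_nat (Suc m)) q)"
    by (simp add: sum_distrib_left mult_ac flip: minus_one_power_stirling)
  finally show ?thesis .
qed

theorem theorem3p9:
  fixes q x :: real and l :: nat
  assumes "q > 0" and "\<bar>x\<bar> < q"
  defines "T \<equiv> (\<lambda>i. let j = i + 2 in
            of_real (x ^ (j - 1) / fact (j - 1)) *
            (\<Sum>k=0..l. of_nat (l choose k) * (-1) ^ k * fact k *
                 of_int (stirling1_signed j (k + 1)) * zetaE_deriv (l - k) (of_nat j) q))"
  shows "summable T \<and>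
         mod_stieltjes l (q + x) = mod_stieltjes l q + (-1) ^ l * (\<Sum>i. T i)"
proof -
  define t where "t m = (deriv ^^ l) (zetaE_taylor_term q x m) 1" for m
  have "t sums zetaE_deriv l 1 (q + x)"
    unfolding t_def using assms(1,2) by (rule sums_higher_deriv_zetaE_taylor_term)
  moreover have "T = (\<lambda>i. t (Suc i))"
    by (simp add: T_def t_def higher_deriv_zetaE_taylor_term[OF assms(1)] fun_eq_iff numeral_2_eq_2)
  moreover have "t 0 = zetaE_deriv l 1 q"
    by (simp add: t_def higher_deriv_zetaE_taylor_term[OF assms(1)] sum.atLeast_Suc_atMost stirling1_signed_def)
  ultimately have "T sums (zetaE_deriv l 1 (q + x) - zetaE_deriv l 1 q)"
    by (simp add: sums_Suc_iff)
  then have "summable T" "zetaE_deriv l 1 (q + x) = zetaE_deriv l 1 q + (\<Sum>i. T i)"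
    by (simp_all add: sums_iff)
  then show ?thesis
    by (simp add: mod_stieltjes_def algebra_simps)
qed

end
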